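(* Let $p$ be an odd prime, $\mathcal O$ the ring of integers of a finite extension of $\mathbb Q_p$, and integers $0\le s\le r\le g$. Then (1) $\mathrm{Fil}^{r,s}(V_g(\mathcal O))$ is stable under the action of $S_0(p)$; (2) there is an isomorphism of $S_0(p)$-modules $$\mathrm{Fil}^{r,s}(V_g(\mathcal O))/\mathrm{Fil}^{r,s+1}(V_g(\mathcal O))\cong\big(\mathcal O/p\mathcal O(a^{g-2r+2s})\big)(r-s),$$ and this quotient is generated by the image of the monomial $p^sX^{r-s}Y^{g-r+s}$.
   Context: $V_g(\mathcal O)$: homogeneous degree-$g$ polynomials in $X,Y$ over $\mathcal O$, with right action $(P|\gamma)(X,Y)=P(dX-cY,-bX+aY)$ for $\gamma=\begin{pmatrix}a&b\\c&d\end{pmatrix}$. $S_0(p)=\{\begin{pmatrix}a&b\\c&d\end{pmatrix}\in M_2(\mathbb Z):ad-bc\ne0,\ p\mid c,\ p\nmid a\}$. $\mathrm{Fil}^r=\mathrm{Fil}^r(V_g(\mathcal O))=\{\sum_{j=0}^gb_jX^jY^{g-j}:p^{r-j}\mid b_j\text{ for }0\le j\le r-1\}$, and for $0\le s\le r+1$, $\mathrm{Fil}^{r,s}=\{\sum b_jX^jY^{g-j}\in\mathrm{Fil}^r:p^{r-j+1}\mid b_j\text{ for }r+1-s\le j\le r\}$ (so $\mathrm{Fil}^{r,0}=\mathrm{Fil}^r$ and $\mathrm{Fil}^{r,r+1}=\mathrm{Fil}^{r+1}$). $\big(\mathcal O/p\mathcal O(a^j)\big)(m)$ denotes $\mathcal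 O/p\mathcal O$ on which $\gamma=\begin{pmatrix}a&b\\c&d\end{pmatrix}\in S_0(p)$ acts by multiplication by $\det(\gamma)^m a^j$. *)

theory Defs
  imports "HOL-Computational_Algebra.Polynomial" "HOL-Computational_Algebra.Primes"
begin

text \<open>The ring O: ring of integers of a finite extension of Q_p, characterised as a
  p-adically complete discrete valuation ring of characteristic 0 with finite residue
  field of characteristic p (uniformizer pi).\<close>
definition padic_integer_ring :: "nat \<Rightarrow> 'a::idom itself \<Rightarrow> bool" where
  "padic_integer_ring p T \<longleftrightarrow>
     inj (of_nat :: nat \<Rightarrow> 'a) \<and>
     (\<exists>pi::'a. pi \<noteq> 0 \<and> \<not> pi dvd 1 \<and>
        (\<forall>x. x \<noteq> 0 \<longrightarrow> (\<exists>u n. u dvd 1 \<and> x = u * pi ^ n)) \<and>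
        finite (range (\<lambda>x. {y. pi dvd (x - y)})) \<and>
        pi dvd of_nat p \<and>
        (\<forall>f::nat \<Rightarrow> 'a. (\<forall>n. pi ^ n dvd (f (Suc n) - f n)) \<longrightarrow>
            (\<exists>L. \<forall>n. pi ^ n dvd (L - f n))))"

text \<open>Homogeneous degree-g forms sum_j b_j X^j Y^(g-j) are represented by their
  coefficient functions b :: nat => 'a, with b j = 0 for j > g.\<close>
definition Vg :: "nat \<Rightarrow> (nat \<Rightarrow> 'a::comm_ring_1) set" where
  "Vg g = {b. \<forall>j>g. b j = 0}"

text \<open>Right action (P|gamma)(X,Y) = P(dX - cY, -bX + aY), computed via dehomogenisation
  Y = 1: the coefficient of X^k Y^(g-k) of P|gamma is the X^k-coefficient of
  sum_j b_j (dX - c)^j (a - bX)^(g-j).\<close>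
definition form_act :: "nat \<Rightarrow> int \<times> int \<times> int \<times> int \<Rightarrow> (nat \<Rightarrow> 'a::comm_ring_1) \<Rightarrow> nat \<Rightarrow> 'a" where
  "form_act g \<gamma> P = (case \<gamma> of (a, b, c, d) \<Rightarrow>
     (\<lambda>k. if k \<le> g then
        coeff (\<Sum>j\<le>g. smult (P j) ([:- of_int c, of_int d:] ^ j * [:of_int a, - of_int b:] ^ (g - j))) k
      else 0))"

text \<open>gamma = (a, b, c, d) stands for the matrix [[a, b], [c, d]].\<close>
definition S0 :: "nat \<Rightarrow> (int \<times> int \<times> int \<times> int) set" where
  "S0 p = {(a, b, c, d). a * d - b * c \<noteq> 0 \<and> int p dvd c \<and> \<not> int p dvd a}"

definition FilR :: "nat \<Rightarrow> nat \<Rightarrow> nat \<Rightarrow> (nat \<Rightarrow> 'a::comm_ring_1) set" where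
  "FilR p g r = {b \<in> Vg g. \<forall>j. j < r \<longrightarrow> (of_nat p) ^ (r - j) dvd b j}"

definition FilRS :: "nat \<Rightarrow> nat \<Rightarrow> nat \<Rightarrow> nat \<Rightarrow> (nat \<Rightarrow> 'a::comm_ring_1) set" where
  "FilRS p g r s = {b \<in> FilR p g r.
      \<forall>j. r + 1 - s \<le> j \<and> j \<le> r \<longrightarrow> (of_nat p) ^ (r - j + 1) dvd b j}"

definition cong_p :: "nat \<Rightarrow> 'a::comm_ring_1 \<Rightarrow> 'a \<Rightarrow> bool" where
  "cong_p p x y \<longleftrightarrow> of_nat p dvd (x - y)"

end

theory Submission
  imports Defs
begin

text \<open>Both filtrations are cut out by one exponent function: a form sum_j b_j X^j Y^(g-j) lies
  in Fil^{r,s} iff p^(w j) divides b_j for every j, where w k \<le> w j + (j - k). Since p divides c,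
  the X^k-coefficient of (dX - c)^j is divisible by p^(j - k), so the action of \<gamma> \<in> S_0(p) moves
  b_j only into lower coefficients and gains enough powers of p on the way; this is stability.
  The graded piece is read off the single coefficient b_{r-s} = p^s \<phi>(P), and modulo p^(s+1)
  the action multiplies it by d^(r-s) a^(g-r+s), which is congruent to
  det(\<gamma>)^(r-s) a^(g-2r+2s) modulo p because ad \<equiv> det(\<gamma>).\<close>

definition fil_weight :: "nat \<Rightarrow> nat \<Rightarrow> nat \<Rightarrow> nat" where
  "fil_weight r s j = (if j < r + 1 - s then r - j else if j \<le> r then r - j + 1 else 0)"

lemma fil_weight_le: "s \<le> r \<Longrightarrow> fil_weight r s k \<le> fil_weight r s j + (j - k)"
  unfolding fil_weight_def by auto

lemma fil_weight_off_diag: "s \<le> r \<Longrightarrow> j \<noteq> r - s \<Longrightarrow> s + 1 \<le> fil_weight r s j + (j - (r - s))"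
  unfolding fil_weight_def by auto

lemma fil_weight_diag: "s \<le> r \<Longrightarrow> fil_weight r s (r - s) = s"
  unfolding fil_weight_def by auto

lemma fil_weight_Suc:
  "s \<le> r \<Longrightarrow> fil_weight r (Suc s) j = (if j = r - s then s + 1 else fil_weight r s j)"
  unfolding fil_weight_def by auto

lemma FilRS_eq_weight:
  assumes "s \<le> r + 1"
  shows "FilRS p g r s = {b \<in> Vg g. \<forall>j. (of_nat p :: 'a::comm_ring_1) ^ fil_weight r s j dvd b j}"
proof -
  have "(\<forall>j<r. q ^ (r - j) dvd b j) \<and> (\<forall>j. r + 1 - s \<le> j \<and> j \<le> r \<longrightarrow> q ^ (r - j + 1) dvd b j)
     \<longleftrightarrow> (\<forall>j. q ^ fil_weight r s j dvd b j)" for b :: "nat \<Rightarrow> 'a" and q :: 'a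
  proof safe
    fix j
    assume "\<forall>j<r. q ^ (r - j) dvd b j" and "\<forall>j. r + 1 - s \<le> j \<and> j \<le> r \<longrightarrow> q ^ (r - j + 1) dvd b j"
    then show "q ^ fil_weight r s j dvd b j"
      using assms by (cases "j < r") (auto simp: fil_weight_def dest: spec[of _ r])
  next
    fix j
    assume weight: "\<forall>j. q ^ fil_weight r s j dvd b j"
    show "q ^ (r - j) dvd b j" if "j < r"
      using that weight[rule_format, of j] le_imp_power_dvd[of "r - j" "fil_weight r s j" q]
      by (auto simp: fil_weight_def intro: dvd_trans)
    show "q ^ (r - j + 1) dvd b j" if "r + 1 - s \<le> j" "j \<le> r"
      using that weight[rule_format, of j] by (simp add: fil_weight_def)
  qed
  then show ?thesis
    unfolding FilRS_def FilR_def by auto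
qed

lemma power_dvd_coeff_linear_power_mult:
  fixes q u d :: "'a::comm_ring_1"
  assumes "q dvd u"
  shows "q ^ (j - k) dvd coeff ([:u, d:] ^ j * W) k"
proof (induction j arbitrary: k)
  case 0
  then show ?case by simp
next
  case (Suc j)
  define Q where "Q = [:u, d:] ^ j * W"
  have "[:u, d:] ^ Suc j * W = [:u, d:] * Q"
    by (simp only: Q_def power_Suc mult.assoc)
  then have expand: "[:u, d:] ^ Suc j * W = smult u Q + pCons 0 (smult d Q)"
    by simp
  show ?case
  proof (cases k)
    case 0
    then show ?thesis
      unfolding expand using Suc.IH[of 0] assms by (simp add: Q_def mult_dvd_mono)
  next
    case (Suc k')
    have "q ^ (j - k') dvd q ^ Suc (j - Suc k')"
      by (rule le_imp_power_dvd) simp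
    also have "\<dots> dvd u * coeff Q (Suc k')"
      using Suc.IH[of "Suc k'"] assms by (simp add: Q_def mult_dvd_mono)
    finally show ?thesis
      unfolding expand using Suc.IH[of k'] Suc by (simp add: Q_def)
  qed
qed

lemma coeff_linear_power_mult_diag:
  fixes q u d :: "'a::comm_ring_1"
  assumes "q dvd u"
  shows "q dvd coeff ([:u, d:] ^ j * W) j - d ^ j * coeff W 0"
proof (induction j)
  case 0
  then show ?case by simp
next
  case (Suc j)
  define Q where "Q = [:u, d:] ^ j * W"
  have "coeff ([:u, d:] ^ Suc j * W) (Suc j) - d ^ Suc j * coeff W 0
      = u * coeff Q (Suc j) + d * (coeff Q j - d ^ j * coeff W 0)"
    by (simp add: Q_def mult.assoc algebra_simps)
  then show ?case
    using Suc assms by (simp add: Q_def)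
qed

lemma dvd_power_diff:
  fixes q x y :: "'a::comm_ring_1"
  assumes "q dvd x - y"
  shows "q dvd x ^ n - y ^ n"
  using assms by (simp add: power_diff_sumr2)

lemma form_act_coeff:
  "form_act g (a, b, c, d) P k = (if k \<le> g then (\<Sum>j\<le>g. P j *
     coeff ([:- of_int c, of_int d:] ^ j * [:of_int a, - of_int b:] ^ (g - j)) k) else 0)"
  by (simp add: form_act_def coeff_sum)

lemma of_int_S0_lower_left_dvd:
  "(a, b, c, d) \<in> S0 p \<Longrightarrow> (of_nat p :: 'a::comm_ring_1) dvd of_int c"
  by (auto simp: S0_def)

lemma form_act_coeff_weight_dvd:
  fixes P :: "nat \<Rightarrow> 'a::comm_ring_1" and q :: 'a
  assumes "s \<le> r" "q dvd of_int c" "\<forall>j. q ^ fil_weight r s j dvd P j"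
  shows "q ^ fil_weight r s k dvd form_act g (a, b, c, d) P k"
proof -
  have "q ^ fil_weight r s k dvd
      P j * coeff ([:- of_int c, of_int d:] ^ j * [:of_int a, - of_int b:] ^ (g - j)) k" for j
  proof -
    have "q ^ fil_weight r s k dvd q ^ (fil_weight r s j + (j - k))"
      using fil_weight_le[OF assms(1)] by (rule le_imp_power_dvd)
    also have "\<dots> dvd P j * coeff ([:- of_int c, of_int d:] ^ j * [:of_int a, - of_int b:] ^ (g - j)) k"
      unfolding power_add using assms(2,3)
      by (intro mult_dvd_mono power_dvd_coeff_linear_power_mult) auto
    finally show ?thesis .
  qed
  then show ?thesis
    by (simp add: form_act_coeff dvd_sum)
qed

lemma form_act_mem_FilRS:
  fixes P :: "nat \<Rightarrow> 'a::comm_ring_1"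
  assumes "s \<le> r" "\<gamma> \<in> S0 p" "P \<in> FilRS p g r s"
  shows "form_act g \<gamma> P \<in> FilRS p g r s"
proof -
  obtain a b c d where \<gamma>: "\<gamma> = (a, b, c, d)"
    by (cases \<gamma>) auto
  have FilRS: "FilRS p g r s = {b \<in> Vg g. \<forall>j. (of_nat p :: 'a) ^ fil_weight r s j dvd b j}"
    using assms(1) by (simp add: FilRS_eq_weight)
  have "(of_nat p :: 'a) ^ fil_weight r s k dvd form_act g \<gamma> P k" for k
    using assms(3) form_act_coeff_weight_dvd[OF assms(1) of_int_S0_lower_left_dvd]
      assms(2) unfolding \<gamma> FilRS by blast
  moreover have "form_act g \<gamma> P \<in> Vg g"
    by (simp add: \<gamma> Vg_def form_act_coeff)
  ultimately show ?thesis
    unfolding FilRS by blast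
qed

text \<open>Modulo p^(s+1) the coefficient of X^k only sees the term j = k, and there
  (dX - c)^k (a - bX)^(g-k) contributes d^k a^(g-k) up to a multiple of p.\<close>

lemma form_act_diag_coeff_cong:
  fixes P :: "nat \<Rightarrow> 'a::comm_ring_1" and q :: 'a
  assumes "s \<le> r" "r \<le> g" "q dvd of_int c" "\<forall>j. q ^ fil_weight r s j dvd P j"
  defines "k \<equiv> r - s"
  shows "q ^ (s + 1) dvd form_act g (a, b, c, d) P k - P k * (of_int d ^ k * of_int a ^ (g - k))"
proof -
  define U :: "nat \<Rightarrow> 'a poly" where
    "U j = [:- of_int c, of_int d:] ^ j * [:of_int a, - of_int b:] ^ (g - j)" for j
  define f where "f j = P j * coeff (U j) k" for j
  have "k \<le> g"
    using assms(2) by (simp add: k_def)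
  then have "form_act g (a, b, c, d) P k - P k * (of_int d ^ k * of_int a ^ (g - k)) =
      P k * (coeff (U k) k - of_int d ^ k * of_int a ^ (g - k)) + (\<Sum>j\<in>{..g} - {k}. f j)"
    by (simp add: form_act_coeff f_def U_def sum.remove algebra_simps)
  moreover have "q ^ s * q dvd P k * (coeff (U k) k - of_int d ^ k * of_int a ^ (g - k))"
    using assms(4)[rule_format, of k] fil_weight_diag[OF assms(1)]
      coeff_linear_power_mult_diag[of q "- of_int c" "of_int d" k "[:of_int a, - of_int b:] ^ (g - k)"]
      assms(3)
    by (intro mult_dvd_mono) (simp_all add: k_def U_def coeff_0_power)
  moreover have "q ^ (s + 1) dvd (\<Sum>j\<in>{..g} - {k}. f j)"
  proof (intro dvd_sum)
    fix j
    assume "j \<in> {..g} - {k}"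
    then have "j \<noteq> k"
      by simp
    have "q ^ (s + 1) dvd q ^ (fil_weight r s j + (j - k))"
      using fil_weight_off_diag[OF assms(1)] \<open>j \<noteq> k\<close> by (intro le_imp_power_dvd) (simp add: k_def)
    also have "\<dots> dvd f j"
      unfolding power_add f_def U_def using assms(3,4)
      by (intro mult_dvd_mono power_dvd_coeff_linear_power_mult) auto
    finally show "q ^ (s + 1) dvd f j" .
  qed
  ultimately show ?thesis
    by (simp add: mult.commute)
qed

text \<open>The map \<phi> of the statement: P \<mapsto> b_{r-s}/p^s (arbitrary unless p^s divides b_{r-s}).\<close>

definition graded_coeff :: "nat \<Rightarrow> nat \<Rightarrow> nat \<Rightarrow> (nat \<Rightarrow> 'a::comm_ring_1) \<Rightarrow> 'a" where
  "graded_coeff p r s P = (SOME y. P (r - s) = of_nat p ^ s * y)"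

definition fil_generator :: "nat \<Rightarrow> nat \<Rightarrow> nat \<Rightarrow> nat \<Rightarrow> 'a::comm_ring_1" where
  "fil_generator p r s = (\<lambda>j. if j = r - s then of_nat p ^ s else 0)"

lemma graded_coeff_eqI:
  fixes P :: "nat \<Rightarrow> 'a::idom"
  assumes "of_nat p \<noteq> (0 :: 'a)" "P (r - s) = of_nat p ^ s * y"
  shows "graded_coeff p r s P = y"
proof -
  have "P (r - s) = of_nat p ^ s * graded_coeff p r s P"
    unfolding graded_coeff_def using assms(2) by (rule someI)
  with assms show ?thesis
    by simp
qed

lemma FilRS_coeff_eq_graded_coeff:
  fixes P :: "nat \<Rightarrow> 'a::idom"
  assumes "of_nat p \<noteq> (0 :: 'a)" "s \<le> r" "P \<in> FilRS p g r s"
  shows "P (r - s) = of_nat p ^ s * graded_coeff p r s P"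
proof -
  have "\<forall>j. (of_nat p :: 'a) ^ fil_weight r s j dvd P j"
    using assms(2,3) by (simp add: FilRS_eq_weight)
  then have "(of_nat p :: 'a) ^ s dvd P (r - s)"
    using fil_weight_diag[OF assms(2)] by metis
  then obtain y where "P (r - s) = of_nat p ^ s * y"
    by (elim dvdE)
  with graded_coeff_eqI[OF assms(1)] show ?thesis
    by metis
qed

lemma graded_coeff_add:
  fixes P Q :: "nat \<Rightarrow> 'a::idom"
  assumes "of_nat p \<noteq> (0 :: 'a)" "s \<le> r" "P \<in> FilRS p g r s" "Q \<in> FilRS p g r s"
  shows "graded_coeff p r s (\<lambda>j. P j + Q j) = graded_coeff p r s P + graded_coeff p r s Q"
  using assms by (intro graded_coeff_eqI) (simp_all add: FilRS_coeff_eq_graded_coeff distrib_left)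

lemma graded_coeff_scale:
  fixes P :: "nat \<Rightarrow> 'a::idom"
  assumes "of_nat p \<noteq> (0 :: 'a)" "s \<le> r" "P \<in> FilRS p g r s"
  shows "graded_coeff p r s (\<lambda>j. x * P j) = x * graded_coeff p r s P"
  using assms by (intro graded_coeff_eqI) (simp_all add: FilRS_coeff_eq_graded_coeff mult.left_commute)

lemma graded_coeff_scaled_generator:
  "of_nat p \<noteq> (0 :: 'a::idom) \<Longrightarrow> graded_coeff p r s (\<lambda>j. x * fil_generator p r s j) = (x :: 'a)"
  by (rule graded_coeff_eqI) (simp_all add: fil_generator_def)

lemma scaled_generator_mem_FilRS:
  assumes "s \<le> r" "r \<le> g"
  shows "(\<lambda>j. x * fil_generator p r s j) \<in> (FilRS p g r s :: (nat \<Rightarrow> 'a::comm_ring_1) set)"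
  using assms fil_weight_diag[OF assms(1)]
  by (auto simp: FilRS_eq_weight Vg_def fil_generator_def)

lemma sub_graded_generator_mem_FilRS_Suc:
  fixes P :: "nat \<Rightarrow> 'a::idom"
  assumes "of_nat p \<noteq> (0 :: 'a)" "s \<le> r" "P \<in> FilRS p g r s"
  shows "(\<lambda>j. P j - graded_coeff p r s P * fil_generator p r s j) \<in> FilRS p g r (s + 1)"
  using assms FilRS_coeff_eq_graded_coeff[OF assms]
  by (auto simp: FilRS_eq_weight fil_weight_Suc Vg_def fil_generator_def)

lemma graded_coeff_dvd_iff_mem_FilRS_Suc:
  fixes P :: "nat \<Rightarrow> 'a::idom"
  assumes "of_nat p \<noteq> (0 :: 'a)" "s \<le> r" "P \<in> FilRS p g r s"
  shows "of_nat p dvd graded_coeff p r s P \<longleftrightarrow> P \<in> FilRS p g r (s + 1)"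
proof -
  have "P \<in> FilRS p g r (s + 1) \<longleftrightarrow> (of_nat p :: 'a) ^ (s + 1) dvd P (r - s)"
    using assms(2,3) by (auto simp: FilRS_eq_weight fil_weight_Suc split: if_splits)
  also have "\<dots> \<longleftrightarrow> of_nat p ^ s * of_nat p dvd of_nat p ^ s * graded_coeff p r s P"
    using FilRS_coeff_eq_graded_coeff[OF assms] by simp
  also have "\<dots> \<longleftrightarrow> of_nat p dvd graded_coeff p r s P"
    using assms(1) by simp
  finally show ?thesis
    by simp
qed

lemma graded_coeff_form_act_dvd:
  fixes P :: "nat \<Rightarrow> 'a::idom"
  assumes "of_nat p \<noteq> (0 :: 'a)" "s \<le> r" "r \<le> g" "(a, b, c, d) \<in> S0 p" "P \<in> FilRS p g r s"
  defines "k \<equiv> r - s"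
  shows "of_nat p dvd graded_coeff p r s (form_act g (a, b, c, d) P)
      - graded_coeff p r s P * (of_int d ^ k * of_int a ^ (g - k))"
proof -
  let ?E = "of_int d ^ k * of_int a ^ (g - k) :: 'a"
  have "\<forall>j. (of_nat p :: 'a) ^ fil_weight r s j dvd P j"
    using assms(2,5) by (simp add: FilRS_eq_weight)
  then have "of_nat p ^ (s + 1) dvd form_act g (a, b, c, d) P k - P k * ?E"
    unfolding k_def using assms(2-4) by (intro form_act_diag_coeff_cong of_int_S0_lower_left_dvd)
  also have "form_act g (a, b, c, d) P k - P k * ?E = of_nat p ^ s *
      (graded_coeff p r s (form_act g (a, b, c, d) P) - graded_coeff p r s P * ?E)"
    using FilRS_coeff_eq_graded_coeff[OF assms(1,2) form_act_mem_FilRS[OF assms(2,4,5)]]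
      FilRS_coeff_eq_graded_coeff[OF assms(1,2,5)]
    by (simp add: k_def right_diff_distrib mult.assoc)
  finally show ?thesis
    using assms(1) by (simp add: mult.commute)
qed

text \<open>The character a^e with e = g - 2r + 2s may have negative exponent; it is encoded by
  putting a^(-e) on the other side, and \<open>nat\<close> truncates one of the two exponents to 0.\<close>

lemma graded_coeff_form_act_cong:
  fixes P :: "nat \<Rightarrow> 'a::idom"
  assumes "of_nat p \<noteq> (0 :: 'a)" "s \<le> r" "r \<le> g" "(a, b, c, d) \<in> S0 p" "P \<in> FilRS p g r s"
  defines "e \<equiv> int g - 2 * int r + 2 * int s"
  shows "cong_p p (graded_coeff p r s (form_act g (a, b, c, d) P) * of_int a ^ nat (- e))
      (of_int (a * d - b * c) ^ (r - s) * of_int a ^ nat e * graded_coeff p r s P)"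
proof -
  define k where "k = r - s"
  define A where "A = (of_int a :: 'a)"
  define D where "D = (of_int d :: 'a)"
  define \<phi> where "\<phi> = graded_coeff p r s P"
  define \<phi>' where "\<phi>' = graded_coeff p r s (form_act g (a, b, c, d) P)"
  have act: "of_nat p dvd \<phi>' - \<phi> * (D ^ k * A ^ (g - k))"
    using graded_coeff_form_act_dvd[OF assms(1-5)] by (simp add: \<phi>_def \<phi>'_def A_def D_def k_def)
  have "of_nat p dvd (of_int (a * d - b * c) :: 'a) - A * D"
    using of_int_S0_lower_left_dvd[OF assms(4)] by (auto simp: A_def D_def intro: dvd_mult)
  then have det: "of_nat p dvd (of_int (a * d - b * c) :: 'a) ^ k - (A * D) ^ k"
    by (rule dvd_power_diff)
  have exponents: "g - k + nat (- e) = k + nat e"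
    using assms(2,3) unfolding k_def e_def by linarith
  have "\<phi> * (D ^ k * A ^ (g - k)) * A ^ nat (- e) = \<phi> * D ^ k * A ^ (g - k + nat (- e))"
    by (simp add: power_add mult.assoc)
  also have "\<dots> = (A * D) ^ k * A ^ nat e * \<phi>"
    unfolding exponents by (simp add: power_add power_mult_distrib ac_simps)
  finally have "\<phi>' * A ^ nat (- e) - of_int (a * d - b * c) ^ k * A ^ nat e * \<phi>
      = (\<phi>' - \<phi> * (D ^ k * A ^ (g - k))) * A ^ nat (- e)
        - (of_int (a * d - b * c) ^ k - (A * D) ^ k) * (A ^ nat e * \<phi>)"
    by (simp add: algebra_simps)
  also have "of_nat p dvd \<dots>"
    by (rule dvd_diff[OF dvd_mult2[OF act] dvd_mult2[OF det]])
  finally show ?thesis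
    by (simp add: cong_p_def \<phi>_def \<phi>'_def A_def k_def)
qed

lemma padic_integer_ring_of_nat_neq_0:
  assumes "padic_integer_ring p TYPE('a::idom)" "p \<noteq> 0"
  shows "(of_nat p :: 'a) \<noteq> 0"
  using assms unfolding padic_integer_ring_def by (metis inj_eq of_nat_0)

theorem lemma6p6:
  fixes p r s g :: nat
  assumes "prime p" and "odd p"
    and "padic_integer_ring p TYPE('a::idom)"
    and "s \<le> r" and "r \<le> g"
  shows
    "(\<forall>\<gamma>\<in>S0 p. \<forall>P\<in>(FilRS p g r s :: (nat \<Rightarrow> 'a) set). form_act g \<gamma> P \<in> FilRS p g r s)
     \<and>
     (\<exists>\<phi> :: (nat \<Rightarrow> 'a) \<Rightarrow> 'a.
        (\<forall>P\<in>FilRS p g r s. \<forall>Q\<in>FilRS p g r s.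
            cong_p p (\<phi> (\<lambda>j. P j + Q j)) (\<phi> P + \<phi> Q)) \<and>
        (\<forall>P\<in>FilRS p g r s. \<forall>x::'a. cong_p p (\<phi> (\<lambda>j. x * P j)) (x * \<phi> P)) \<and>
        (\<forall>x::'a. \<exists>P\<in>FilRS p g r s. cong_p p (\<phi> P) x) \<and>
        (\<forall>P\<in>FilRS p g r s. cong_p p (\<phi> P) 0 \<longleftrightarrow> P \<in> FilRS p g r (s + 1)) \<and>
        (\<forall>\<gamma>\<in>S0 p. \<forall>P\<in>FilRS p g r s.
           (case \<gamma> of (a, b, c, d) \<Rightarrow>
              let e = int g - 2 * int r + 2 * int s in
              cong_p p (\<phi> (form_act g \<gamma> P) * of_int a ^ nat (- e))
                       (of_int (a * d - b * c) ^ (r - s) * of_int a ^ nat e * \<phi> P))))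
     \<and>
     ((\<lambda>j. if j = r - s then of_nat p ^ s else 0) \<in> (FilRS p g r s :: (nat \<Rightarrow> 'a) set))
     \<and>
     (\<forall>P\<in>(FilRS p g r s :: (nat \<Rightarrow> 'a) set). \<exists>x::'a.
        (\<lambda>j. P j - x * (if j = r - s then of_nat p ^ s else 0)) \<in> FilRS p g r (s + 1))"
proof -
  have p: "(of_nat p :: 'a) \<noteq> 0"
    using assms(1,3) padic_integer_ring_of_nat_neq_0 prime_gt_0_nat by blast
  have "(\<lambda>j. 1 * fil_generator p r s j) \<in> (FilRS p g r s :: (nat \<Rightarrow> 'a) set)"
    using assms(4,5) by (rule scaled_generator_mem_FilRS)
  then have generator: "(\<lambda>j. if j = r - s then of_nat p ^ s else 0) \<in> (FilRS p g r s :: (nat \<Rightarrow> 'a) set)"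
    by (simp add: fil_generator_def)
  have "\<forall>\<gamma>\<in>S0 p. \<forall>P\<in>(FilRS p g r s :: (nat \<Rightarrow> 'a) set). case \<gamma> of (a, b, c, d) \<Rightarrow>
      let e = int g - 2 * int r + 2 * int s in
      cong_p p (graded_coeff p r s (form_act g \<gamma> P) * of_int a ^ nat (- e))
        (of_int (a * d - b * c) ^ (r - s) * of_int a ^ nat e * graded_coeff p r s P)"
    unfolding Let_def Ball_def split_paired_All prod.case
    by (intro allI impI graded_coeff_form_act_cong[OF p assms(4,5)])
  moreover have "\<exists>P\<in>FilRS p g r s. cong_p p (graded_coeff p r s P) x" for x :: 'a
    using scaled_generator_mem_FilRS[OF assms(4,5)] graded_coeff_scaled_generator[OF p]
    by (intro bexI[of _ "\<lambda>j. x * fil_generator p r s j"]) (simp_all add: cong_p_def)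
  moreover have "\<forall>P\<in>(FilRS p g r s :: (nat \<Rightarrow> 'a) set). \<exists>x::'a.
      (\<lambda>j. P j - x * (if j = r - s then of_nat p ^ s else 0)) \<in> FilRS p g r (s + 1)"
    using sub_graded_generator_mem_FilRS_Suc[OF p assms(4)] unfolding fil_generator_def by blast
  ultimately show ?thesis
    using form_act_mem_FilRS[OF assms(4)] generator
      graded_coeff_add[OF p assms(4)] graded_coeff_scale[OF p assms(4)]
      graded_coeff_dvd_iff_mem_FilRS_Suc[OF p assms(4)]
    by (intro conjI exI[of _ "graded_coeff p r s"]) (auto simp: cong_p_def)
qed

end
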